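(* Let $n\ge 7$ and let $G$ be a bicyclic graph on $n$ vertices. (1) $\mathrm{irr}_t(G)\ge 2n-4$. Equality holds if and only if the degree sequence of $G$ is $(3,3,2,\ldots,2)$, i.e. two vertices of degree $3$ and $n-2$ of degree $2$. (2) If the degree sequence of $G$ is not $(3,3,2,\ldots,2)$, then $\mathrm{irr}_t(G)\ge 2n-2$. Equality holds if and only if the degree sequence of $G$ is $(4,2,\ldots,2)$, i.e. one vertex of degree $4$ and $n-1$ of degree $2$. (3) If the degree sequence of $G$ is neither $(3,3,2,\ldots,2)$ nor $(4,2,\ldots,2)$, then $\mathrm{irr}_t(G)\ge 4n-10$. Equality holds if and only if the degree sequence of $G$ is $(3,3,3,2,\ldots,2,1)$, i.e. three vertices of degree $3$, $n-4$ of degree $2$ and one of degree $1$.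
   Context: A bicyclic graph is a simple connected graph whose number of edges equals its number of vertices plus one. For a graph $G=(V,E)$ and $w\in V$, $d_G(w)$ is the degree of $w$. The total irregularity is $\mathrm{irr}_t(G)=\frac12\sum_{x,y\in V}|d_G(x)-d_G(y)|$, where the sum runs over all ordered pairs of vertices. Degree sequences are listed in nonincreasing order. *)

theory Defs
  imports Complex_Main "HOL-Library.Multiset"
begin

definition simple_graph :: "'a set \<Rightarrow> 'a set set \<Rightarrow> bool" where
  "simple_graph V E \<longleftrightarrow> finite V \<and> (\<forall>e\<in>E. e \<subseteq> V \<and> card e = 2)"

definition adj_rel :: "'a set set \<Rightarrow> ('a \<times> 'a) set" where
  "adj_rel E = {(x, y). {x, y} \<in> E}"

definition connected_graph :: "'a set \<Rightarrow> 'a set set \<Rightarrow> bool" where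
  "connected_graph V E \<longleftrightarrow> V \<noteq> {} \<and> (\<forall>u\<in>V. \<forall>v\<in>V. (u, v) \<in> (adj_rel E)\<^sup>*)"

definition bicyclic :: "'a set \<Rightarrow> 'a set set \<Rightarrow> bool" where
  "bicyclic V E \<longleftrightarrow> simple_graph V E \<and> connected_graph V E \<and> card E = card V + 1"

definition degree :: "'a set set \<Rightarrow> 'a \<Rightarrow> nat" where
  "degree E v = card {e\<in>E. v \<in> e}"

definition total_irr :: "'a set \<Rightarrow> 'a set set \<Rightarrow> real" where
  "total_irr V E = (1/2) * (\<Sum>x\<in>V. \<Sum>y\<in>V. \<bar>real (degree E x) - real (degree E y)\<bar>)"

text \<open>Degree sequence, as a multiset of degrees (order-free form of the
  nonincreasing list).\<close>
definition degree_seq :: "'a set \<Rightarrow> 'a set set \<Rightarrow> nat multiset" where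
  "degree_seq V E = image_mset (degree E) (mset_set V)"

end

theory Submission
  imports Defs
begin

(* Only the degrees matter.  In a bicyclic graph on n >= 2 vertices every degree
   is positive and the degrees sum to 2n + 2.  Split the vertices into leaves L
   (degree 1), vertices T of degree 2 and "hubs" H (degree >= 3), with sizes
   p, k, h.  The degree sum forces  sum_H d = p + 2h + 2,  hence  1 <= h <= p + 2,
   and a row-by-row evaluation of the double sum gives
        irr_t = A(p,k,h) + (1/2) * sum_{x,y in H} |d x - d y|,
        A(p,k,h) = p*k + p*(p+h+2) + k*(p+2).
   The hub term is non-negative and vanishes when all hubs have equal degree.
   The pairs (p,h) = (0,2), (0,1), (1,3) force hubs of equal degree 3, 4, 3 and
   give the degree sequences (3,3,2..2), (4,2..2), (3,3,3,2..2,1) with values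
   2n-4, 2n-2, 4n-10; every other admissible pair has A > 4n - 10. *)

section \<open>Degrees of a bicyclic graph\<close>

text \<open>Handshake lemma: every edge contributes to the degrees of its two ends.\<close>
lemma handshake:
  assumes "finite V" "\<forall>e\<in>E. e \<subseteq> V \<and> card e = 2"
  shows "(\<Sum>v\<in>V. degree E v) = 2 * card E"
proof -
  have fE: "finite E"
    using assms by (meson Pow_iff finite_Pow_iff rev_finite_subset subsetI)
  have "(\<Sum>v\<in>V. degree E v) = (\<Sum>v\<in>V. \<Sum>e\<in>E. if v \<in> e then 1 else 0)"
    unfolding degree_def using fE by (simp add: sum.If_cases Int_def)
  also have "\<dots> = (\<Sum>e\<in>E. \<Sum>v\<in>V. if v \<in> e then 1 else 0)"
    by (rule sum.swap)
  also have "\<dots> = (\<Sum>e\<in>E. card e)"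
  proof (rule sum.cong[OF refl])
    fix e assume "e \<in> E"
    then have "e \<subseteq> V" using assms by auto
    then show "(\<Sum>v\<in>V. if v \<in> e then 1 else 0) = card e"
      using assms(1) by (simp add: sum.If_cases Int_absorb1 Int_commute Int_def[symmetric])
  qed
  also have "\<dots> = (\<Sum>e\<in>E. 2)"
    using assms by (intro sum.cong) auto
  finally show ?thesis by simp
qed

lemma connected_degree_pos:
  assumes "simple_graph V E" "connected_graph V E" "2 \<le> card V" "v \<in> V"
  shows "1 \<le> degree E v"
proof -
  have fin: "finite V" using assms(1) unfolding simple_graph_def by simp
  have fE: "finite E"
    using assms(1) unfolding simple_graph_def
    by (meson Pow_iff finite_Pow_iff rev_finite_subset subsetI)
  have "card (V - {v}) \<ge> 1" using assms(3,4) fin by simp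
  then have "V - {v} \<noteq> {}" by (metis card.empty not_one_le_zero)
  then obtain u where u: "u \<in> V" "u \<noteq> v" by blast
  have "(v, u) \<in> (adj_rel E)\<^sup>*"
    using assms(2,4) u unfolding connected_graph_def by auto
  then obtain w where "(v, w) \<in> adj_rel E"
    using u(2) by (metis converse_rtranclE)
  then have "{v, w} \<in> {e\<in>E. v \<in> e}" unfolding adj_rel_def by auto
  then show ?thesis
    unfolding degree_def using fE by (auto simp: Suc_le_eq card_gt_0_iff)
qed

lemma count_image_mset_set:
  assumes "finite V"
  shows "count (image_mset d (mset_set V)) j = card {v\<in>V. d v = j}"
proof -
  have "count (image_mset d (mset_set V)) j = (\<Sum>y\<in>d -` {j} \<inter> V. 1)"
    using assms by (simp add: count_image_mset)
  also have "\<dots> = card {v\<in>V. d v = j}"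
    by (simp add: Int_commute vimage_def Collect_conj_eq)
  finally show ?thesis .
qed

section \<open>Degree assignments of bicyclic type\<close>

locale bicyclic_degrees =
  fixes V :: "'a set" and d :: "'a \<Rightarrow> nat"
  assumes finite_V: "finite V"
    and deg_pos: "\<And>v. v \<in> V \<Longrightarrow> 1 \<le> d v"
    and deg_sum: "(\<Sum>v\<in>V. d v) = 2 * card V + 2"
begin

definition leaves :: "'a set" where "leaves = {v\<in>V. d v = 1}"
definition twos :: "'a set" where "twos = {v\<in>V. d v = 2}"
definition hubs :: "'a set" where "hubs = {v\<in>V. 3 \<le> d v}"

definition deviation :: "'a set \<Rightarrow> 'a set \<Rightarrow> real" where
  "deviation X Y = (\<Sum>x\<in>X. \<Sum>y\<in>Y. \<bar>real (d x) - real (d y)\<bar>)"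

lemma finite_classes: "finite leaves" "finite twos" "finite hubs"
  using finite_V by (auto simp: leaves_def twos_def hubs_def)

text \<open>Since no degree is 0, the three classes partition the vertex set.\<close>
lemma classes_partition:
  "V = leaves \<union> (twos \<union> hubs)" "leaves \<inter> (twos \<union> hubs) = {}" "twos \<inter> hubs = {}"
proof -
  show "V = leaves \<union> (twos \<union> hubs)"
    using deg_pos by (force simp: leaves_def twos_def hubs_def)
qed (auto simp: leaves_def twos_def hubs_def)

lemma sum_classes: "sum f V = sum f leaves + sum f twos + sum f hubs"
proof -
  from classes_partition(2,3) have "sum f (leaves \<union> (twos \<union> hubs)) = sum f leaves + sum f twos + sum f hubs"
    using finite_classes by (simp add: sum.union_disjoint add.assoc)
  then show ?thesis by (simp only: classes_partition(1)[symmetric])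
qed

lemma card_classes: "card V = card leaves + card twos + card hubs"
  using sum_classes[of "\<lambda>_. 1::nat"] by simp

lemma sum_hubs: "(\<Sum>v\<in>hubs. d v) = card leaves + 2 * card hubs + 2"
proof -
  have "(\<Sum>v\<in>leaves. d v) = card leaves" "(\<Sum>v\<in>twos. d v) = 2 * card twos"
    by (simp_all add: leaves_def twos_def)
  then show ?thesis using sum_classes[of d] deg_sum card_classes by simp
qed

lemma sum_hubs_real: "(\<Sum>v\<in>hubs. real (d v)) = real (card leaves) + 2 * real (card hubs) + 2"
  using arg_cong[OF sum_hubs, of real] by simp

lemma card_hubs_le: "card hubs \<le> card leaves + 2"
proof -
  have "(\<Sum>v\<in>hubs. 3) \<le> (\<Sum>v\<in>hubs. d v)"
    by (rule sum_mono) (simp add: hubs_def)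
  then show ?thesis using sum_hubs by simp
qed

lemma card_hubs_pos: "1 \<le> card hubs"
  using sum_hubs by (cases "hubs = {}") (auto simp: Suc_le_eq card_gt_0_iff finite_classes)

lemma hubs_uniform:
  assumes "(\<Sum>v\<in>hubs. d v) = c * card hubs" "c \<le> 3" "v \<in> hubs"
  shows "d v = c"
proof -
  have ge: "\<forall>v\<in>hubs. c \<le> d v" using assms(2) by (auto simp: hubs_def)
  have "(\<Sum>v\<in>hubs. d v - c) = (\<Sum>v\<in>hubs. d v) - (\<Sum>v\<in>hubs. c)"
    using ge by (intro sum_subtractf_nat) auto
  also have "\<dots> = 0" using assms(1) by simp
  finally show ?thesis using ge assms(3) finite_classes by force
qed

lemma deviation_row_leaf:
  assumes "x \<in> leaves"
  shows "deviation {x} V = real (card leaves + card twos + card hubs + 2)"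
proof -
  have "deviation {x} V = (\<Sum>y\<in>V. real (d y) - 1)"
    unfolding deviation_def using assms deg_pos by (auto simp: leaves_def intro!: sum.cong)
  also have "\<dots> = real (card V + 2)"
    using arg_cong[OF deg_sum, of real] by (simp add: sum_subtractf)
  finally show ?thesis using card_classes by simp
qed

lemma deviation_row_two:
  assumes "x \<in> twos"
  shows "deviation {x} V = 2 * real (card leaves) + 2"
proof -
  have "deviation {x} V = (\<Sum>y\<in>leaves. 1) + (\<Sum>y\<in>twos. 0) + (\<Sum>y\<in>hubs. real (d y) - 2)"
    unfolding deviation_def using assms
    by (simp add: sum_classes[of "\<lambda>y. \<bar>real (d x) - real (d y)\<bar>"])
       (auto simp: leaves_def twos_def hubs_def intro!: sum.cong arg_cong2[where f = "(+)"])
  then show ?thesis by (simp add: sum_subtractf sum_hubs_real)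
qed

lemma deviation_row_hub:
  assumes "x \<in> hubs"
  shows "deviation {x} V = real (card leaves) * (real (d x) - 1)
           + real (card twos) * (real (d x) - 2) + deviation {x} hubs"
proof -
  have "deviation {x} V = (\<Sum>y\<in>leaves. real (d x) - 1) + (\<Sum>y\<in>twos. real (d x) - 2)
           + deviation {x} hubs"
    unfolding deviation_def using assms
    by (simp add: sum_classes[of "\<lambda>y. \<bar>real (d x) - real (d y)\<bar>"])
       (auto simp: leaves_def twos_def hubs_def intro!: sum.cong arg_cong2[where f = "(+)"])
  then show ?thesis by simp
qed

lemma deviation_decomposition:
  defines "p \<equiv> card leaves" and "k \<equiv> card twos" and "h \<equiv> card hubs"
  shows "deviation V V = 2 * real (p * k + p * (p + h + 2) + k * (p + 2)) + deviation hubs hubs"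
proof -
  have rows: "deviation X Y = (\<Sum>x\<in>X. deviation {x} Y)" for X Y
    by (simp add: deviation_def)
  have "deviation V V = (\<Sum>x\<in>leaves. deviation {x} V) + (\<Sum>x\<in>twos. deviation {x} V)
          + (\<Sum>x\<in>hubs. deviation {x} V)"
    unfolding rows[of V] by (rule sum_classes)
  also have "(\<Sum>x\<in>leaves. deviation {x} V) = real p * real (p + k + h + 2)"
    by (simp add: deviation_row_leaf p_def k_def h_def)
  also have "(\<Sum>x\<in>twos. deviation {x} V) = real k * (2 * real p + 2)"
    by (simp add: deviation_row_two p_def k_def)
  also have "(\<Sum>x\<in>hubs. deviation {x} V)
      = real p * ((\<Sum>x\<in>hubs. real (d x)) - real h)
        + real k * ((\<Sum>x\<in>hubs. real (d x)) - 2 * real h) + deviation hubs hubs"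
    by (simp add: deviation_row_hub sum.distrib sum_subtractf rows[of hubs] p_def k_def h_def
        flip: sum_distrib_left)
  also have "real p * real (p + k + h + 2) + real k * (2 * real p + 2)
      + (real p * ((\<Sum>x\<in>hubs. real (d x)) - real h)
         + real k * ((\<Sum>x\<in>hubs. real (d x)) - 2 * real h) + deviation hubs hubs)
      = 2 * real (p * k + p * (p + h + 2) + k * (p + 2)) + deviation hubs hubs"
    by (simp add: sum_hubs_real p_def h_def algebra_simps)
  finally show ?thesis .
qed

lemma deviation_nonneg: "0 \<le> deviation X Y"
  by (simp add: deviation_def sum_nonneg)

lemma deviation_hubs_uniform:
  assumes "\<And>v. v \<in> hubs \<Longrightarrow> d v = c"
  shows "deviation hubs hubs = 0"
  using assms by (simp add: deviation_def)

lemma degree_mset_uniform_hubs: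
  assumes "\<And>v. v \<in> hubs \<Longrightarrow> d v = c"
  shows "image_mset d (mset_set V) =
           replicate_mset (card hubs) c + replicate_mset (card twos) 2 + replicate_mset (card leaves) 1"
proof -
  have const: "image_mset d (mset_set X) = replicate_mset (card X) j"
    if "finite X" "\<And>v. v \<in> X \<Longrightarrow> d v = j" for X j
  proof -
    have "image_mset d (mset_set X) = image_mset (\<lambda>_. j) (mset_set X)"
      using that by (intro image_mset_cong) simp
    then show ?thesis using that(1) by (simp add: image_mset_const_eq)
  qed
  from classes_partition(2,3) have "mset_set (leaves \<union> (twos \<union> hubs)) = mset_set leaves + mset_set twos + mset_set hubs"
    using finite_classes by (simp add: mset_set_Union add.assoc)
  then have "mset_set V = mset_set leaves + mset_set twos + mset_set hubs"
    by (simp only: classes_partition(1)[symmetric])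
  moreover have "image_mset d (mset_set leaves) = replicate_mset (card leaves) 1"
    by (rule const[OF finite_classes(1)]) (simp add: leaves_def)
  moreover have "image_mset d (mset_set twos) = replicate_mset (card twos) 2"
    by (rule const[OF finite_classes(2)]) (simp add: twos_def)
  moreover have "image_mset d (mset_set hubs) = replicate_mset (card hubs) c"
    by (rule const[OF finite_classes(3) assms])
  ultimately show ?thesis by (simp add: add_ac)
qed

lemma degree_mset_pattern:
  defines "M \<equiv> image_mset d (mset_set V)"
  shows "card leaves = count M 1" "card hubs = card V - count M 1 - count M 2"
  using card_classes
  by (simp_all add: M_def leaves_def twos_def count_image_mset_set[OF finite_V])

lemma extremal_degree_msets:
  assumes "4 \<le> card V"
  defines "M \<equiv> image_mset d (mset_set V)"
  shows "M = replicate_mset 2 3 + replicate_mset (card V - 2) 2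
           \<Longrightarrow> card leaves = 0 \<and> card hubs = 2"
    and "M = replicate_mset 1 4 + replicate_mset (card V - 1) 2
           \<Longrightarrow> card leaves = 0 \<and> card hubs = 1"
    and "M = replicate_mset 3 3 + replicate_mset (card V - 4) 2 + replicate_mset 1 1
           \<Longrightarrow> card leaves = 1 \<and> card hubs = 3"
  using degree_mset_pattern assms by (simp_all add: M_def)

end

section \<open>The arithmetic bound\<close>

lemma polynomial_part_bound:
  fixes p k h :: nat
  assumes "1 \<le> h" "h \<le> p + 2" "(p, h) \<notin> {(0, 1), (0, 2), (1, 3)}"
  shows "4 * (p + k + h) < p * k + p * (p + h + 2) + k * (p + 2) + 10"
proof -
  have "p \<noteq> 0" using assms by auto
  then consider "p = 1" | "p = 2" | "p = 3" | "4 \<le> p"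
    by linarith
  then show ?thesis
  proof cases
    case 4
    have "4 * k \<le> p * k" "4 * h \<le> h * p" "4 * p \<le> p * p"
      using 4 by simp_all
    from add_mono[OF add_mono[OF this(1,2)] this(3)]
    have "4 * (p + k + h) \<le> p * k + p * h + p * p"
      by (simp add: algebra_simps)
    moreover have "p * k + p * h + p * p < p * k + p * (p + h + 2) + k * (p + 2) + 10"
      by (simp add: algebra_simps)
    ultimately show ?thesis by linarith
  qed (use assms in \<open>auto simp: algebra_simps\<close>)
qed

section \<open>Classification\<close>

context bicyclic_degrees
begin

lemma classification:
  assumes "4 \<le> card V"
  defines "I \<equiv> deviation V V / 2" and "M \<equiv> image_mset d (mset_set V)"
    and "S1 \<equiv> replicate_mset 2 3 + replicate_mset (card V - 2) (2::nat)"
    and "S2 \<equiv> replicate_mset 1 4 + replicate_mset (card V - 1) (2::nat)"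
    and "S3 \<equiv> replicate_mset 3 3 + replicate_mset (card V - 4) 2 + replicate_mset 1 (1::nat)"
  shows "(I = 2 * real (card V) - 4 \<and> M = S1) \<or> (I = 2 * real (card V) - 2 \<and> M = S2)
       \<or> (I = 4 * real (card V) - 10 \<and> M = S3)
       \<or> (I > 4 * real (card V) - 10 \<and> M \<noteq> S1 \<and> M \<noteq> S2 \<and> M \<noteq> S3)"
proof -
  define p k h where "p = card leaves" and "k = card twos" and "h = card hubs"
  have card_V: "card V = p + k + h" using card_classes by (simp add: p_def k_def h_def)
  have I: "I = real (p * k + p * (p + h + 2) + k * (p + 2)) + deviation hubs hubs / 2"
    using deviation_decomposition by (simp add: I_def p_def k_def h_def)
  have M: "M = replicate_mset h c + replicate_mset k 2 + replicate_mset p 1"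
    if "\<And>v. v \<in> hubs \<Longrightarrow> d v = c" for c
    using degree_mset_uniform_hubs[OF that] by (simp add: M_def p_def k_def h_def)
  have all_3: "\<And>v. v \<in> hubs \<Longrightarrow> d v = 3" if "p + 2 * h + 2 = 3 * h"
    using hubs_uniform sum_hubs that by (simp add: p_def h_def)
  \<comment> \<open>the three extremal patterns force all hubs to have degree 3, 4 and 3 respectively\<close>
  consider "p = 0" "h = 2" | "p = 0" "h = 1" | "p = 1" "h = 3"
    | "(p, h) \<notin> {(0, 1), (0, 2), (1, 3)}"
    by auto
  then show ?thesis
  proof cases
    case 1
    then have hubs_3: "\<And>v. v \<in> hubs \<Longrightarrow> d v = 3" using all_3 by simp
    have "M = S1" using M[OF hubs_3] 1 by (simp add: S1_def card_V)
    moreover have "I = 2 * real (card V) - 4"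
      using I deviation_hubs_uniform[OF hubs_3] 1 by (simp add: card_V)
    ultimately show ?thesis by simp
  next
    case 2
    obtain w where w: "hubs = {w}"
      using \<open>h = 1\<close> unfolding h_def by (rule card_1_singletonE)
    then have "d w = 4" using sum_hubs 2 by (simp add: p_def)
    then have hubs_4: "\<And>v. v \<in> hubs \<Longrightarrow> d v = 4" using w by simp
    have "M = S2" using M[OF hubs_4] 2 by (simp add: S2_def card_V)
    moreover have "I = 2 * real (card V) - 2"
      using I deviation_hubs_uniform[OF hubs_4] 2 by (simp add: card_V)
    ultimately show ?thesis by simp
  next
    case 3
    then have hubs_3: "\<And>v. v \<in> hubs \<Longrightarrow> d v = 3" using all_3 by simp
    have "M = S3" using M[OF hubs_3] 3 by (simp add: S3_def card_V add_ac)
    moreover have "I = 4 * real (card V) - 10"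
      using I deviation_hubs_uniform[OF hubs_3] 3 by (simp add: card_V algebra_simps)
    ultimately show ?thesis by simp
  next
    case 4
    have "4 * card V < p * k + p * (p + h + 2) + k * (p + 2) + 10"
      using polynomial_part_bound[OF _ _ 4] card_hubs_pos card_hubs_le
      by (simp add: card_V p_def h_def)
    then have "I > 4 * real (card V) - 10"
      using I deviation_nonneg[of hubs hubs] by linarith
    moreover have "M \<noteq> S1" "M \<noteq> S2" "M \<noteq> S3"
      using extremal_degree_msets[OF assms(1)] 4
      by (auto simp: M_def S1_def S2_def S3_def p_def h_def)
    ultimately show ?thesis by blast
  qed
qed

end

lemma bicyclic_degrees_graph:
  assumes "bicyclic V E" "2 \<le> card V"
  shows "bicyclic_degrees V (degree E)"
proof
  show "finite V" using assms(1) by (simp add: bicyclic_def simple_graph_def)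
  show "1 \<le> degree E v" if "v \<in> V" for v
    using assms that connected_degree_pos by (auto simp: bicyclic_def)
  show "(\<Sum>v\<in>V. degree E v) = 2 * card V + 2"
    using assms(1) handshake[of V E] by (simp add: bicyclic_def simple_graph_def)
qed

lemma nested_extremal_values:
  fixes I a b c :: real
  assumes "(I = a \<and> M = S1) \<or> (I = b \<and> M = S2) \<or> (I = c \<and> M = S3)
      \<or> (I > c \<and> M \<noteq> S1 \<and> M \<noteq> S2 \<and> M \<noteq> S3)"
    and "a < b" "b < c" "S1 \<noteq> S2" "S1 \<noteq> S3" "S2 \<noteq> S3"
  shows "(I \<ge> a \<and> (I = a \<longleftrightarrow> M = S1))
       \<and> (M \<noteq> S1 \<longrightarrow> I \<ge> b \<and> (I = b \<longleftrightarrow> M = S2))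
       \<and> (M \<noteq> S1 \<longrightarrow> M \<noteq> S2 \<longrightarrow> I \<ge> c \<and> (I = c \<longleftrightarrow> M = S3))"
  using assms by auto

theorem theorem15:
  fixes V :: "'a set" and E :: "'a set set" and n :: nat
  assumes "n \<ge> 7" and "card V = n" and "bicyclic V E"
  defines "S1 \<equiv> replicate_mset 2 3 + replicate_mset (n - 2) (2::nat)"
      and "S2 \<equiv> replicate_mset 1 4 + replicate_mset (n - 1) (2::nat)"
      and "S3 \<equiv> replicate_mset 3 3 + replicate_mset (n - 4) 2 + replicate_mset 1 (1::nat)"
  shows "(total_irr V E \<ge> 2 * real n - 4
         \<and> (total_irr V E = 2 * real n - 4 \<longleftrightarrow> degree_seq V E = S1))
       \<and> (degree_seq V E \<noteq> S1 \<longrightarrow>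
           total_irr V E \<ge> 2 * real n - 2
         \<and> (total_irr V E = 2 * real n - 2 \<longleftrightarrow> degree_seq V E = S2))
       \<and> (degree_seq V E \<noteq> S1 \<longrightarrow> degree_seq V E \<noteq> S2 \<longrightarrow>
           total_irr V E \<ge> 4 * real n - 10
         \<and> (total_irr V E = 4 * real n - 10 \<longleftrightarrow> degree_seq V E = S3))"
proof -
  interpret bicyclic_degrees V "degree E"
    using assms(1-3) by (intro bicyclic_degrees_graph) simp_all
  have "(total_irr V E = 2 * real n - 4 \<and> degree_seq V E = S1)
      \<or> (total_irr V E = 2 * real n - 2 \<and> degree_seq V E = S2)
      \<or> (total_irr V E = 4 * real n - 10 \<and> degree_seq V E = S3)
      \<or> (total_irr V E > 4 * real n - 10 \<and> degree_seq V E \<noteq> S1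
           \<and> degree_seq V E \<noteq> S2 \<and> degree_seq V E \<noteq> S3)"
    using classification assms(1,2)
    by (simp add: total_irr_def deviation_def degree_seq_def S1_def S2_def S3_def)
  moreover have "S1 \<noteq> S2" "S1 \<noteq> S3" "S2 \<noteq> S3"
    by (auto simp: S1_def S2_def S3_def
        dest: arg_cong[where f = "\<lambda>M. count M 4"] arg_cong[where f = "\<lambda>M. count M 1"])
  ultimately show ?thesis
    using assms(1) by (intro nested_extremal_values) simp_all
qed

end
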